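(* Let $G=(U,E)$ be a graph and $\mathcal S\subset 2^U$ a category system such that the greedy category-based routing strategy ROUTING correctly routes messages between all pairs of vertices of $G$. Then $\operatorname{memdim}(\mathcal S)\ge \operatorname{diam}(G)$.
   Context: For $u\in U$ let $\mathrm{cat}(u)=\{C\in\mathcal S: u\in C\}$; the membership dimension is $\operatorname{memdim}(\mathcal S)=\max_{u\in U}|\mathrm{cat}(u)|$. For $s,t\in U$ define $d(s,t)=|\mathrm{cat}(t)\setminus \mathrm{cat}(s)|$. $N(u)$ denotes the set of neighbors of $u$ in $G$, and $\operatorname{diam}(G)$ is the maximum over pairs of vertices of their shortest-path distance in $G$. The strategy ROUTING is: a node $u$ holding a message for destination $w\neq u$ forwards it to a neighbor $v\in N(u)$ with $d(v,w)<d(u,w)$. ROUTING correctly routes messages between all pairs of vertices if for every ordered pair of distinct vertices $u,w$ there is a neighbor $v\in N(u)$ with $d(v,w)<d(u,w)$ (so every message is delivered along a path on which $d(\cdot,w)$ strictly decreases). *)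

theory Defs
  imports Main "HOL-Library.Extended_Nat"
begin

definition is_graph :: "'a set \<Rightarrow> ('a \<Rightarrow> 'a \<Rightarrow> bool) \<Rightarrow> bool" where
  "is_graph U E \<longleftrightarrow> finite U \<and> (\<forall>u v. E u v \<longrightarrow> u \<in> U \<and> v \<in> U)
      \<and> (\<forall>u v. E u v \<longrightarrow> E v u) \<and> (\<forall>u. \<not> E u u)"

definition nbrs :: "'a set \<Rightarrow> ('a \<Rightarrow> 'a \<Rightarrow> bool) \<Rightarrow> 'a \<Rightarrow> 'a set" where
  "nbrs U E u = {v \<in> U. E u v}"

definition cat :: "'a set set \<Rightarrow> 'a \<Rightarrow> 'a set set" where
  "cat S u = {C \<in> S. u \<in> C}"

definition memdim :: "'a set \<Rightarrow> 'a set set \<Rightarrow> nat" where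
  "memdim U S = Sup ((\<lambda>u. card (cat S u)) ` U)"

definition cdist :: "'a set set \<Rightarrow> 'a \<Rightarrow> 'a \<Rightarrow> nat" where
  "cdist S s t = card (cat S t - cat S s)"

definition is_walk :: "'a set \<Rightarrow> ('a \<Rightarrow> 'a \<Rightarrow> bool) \<Rightarrow> 'a \<Rightarrow> 'a \<Rightarrow> 'a list \<Rightarrow> bool" where
  "is_walk U E u w xs \<longleftrightarrow> xs \<noteq> [] \<and> hd xs = u \<and> last xs = w \<and> set xs \<subseteq> U
      \<and> (\<forall>i. Suc i < length xs \<longrightarrow> E (xs ! i) (xs ! Suc i))"

(* shortest-path distance (infinity if no path) *)
definition gdist :: "'a set \<Rightarrow> ('a \<Rightarrow> 'a \<Rightarrow> bool) \<Rightarrow> 'a \<Rightarrow> 'a \<Rightarrow> enat" where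
  "gdist U E u w = (INF xs \<in> {xs. is_walk U E u w xs}. enat (length xs - 1))"

definition diam :: "'a set \<Rightarrow> ('a \<Rightarrow> 'a \<Rightarrow> bool) \<Rightarrow> enat" where
  "diam U E = (SUP u \<in> U. SUP w \<in> U. gdist U E u w)"

definition routing_correct :: "'a set \<Rightarrow> ('a \<Rightarrow> 'a \<Rightarrow> bool) \<Rightarrow> 'a set set \<Rightarrow> bool" where
  "routing_correct U E S \<longleftrightarrow>
     (\<forall>u \<in> U. \<forall>w \<in> U. u \<noteq> w \<longrightarrow> (\<exists>v \<in> nbrs U E u. cdist S v w < cdist S u w))"

end

theory Submission
  imports Defs
begin

text \<open>Each ROUTING step lowers \<open>d(\<cdot>, w)\<close> by at least one, so the message from \<open>u\<close>
reaches \<open>w\<close> within \<open>d(u, w) \<le> |cat(w)| \<le> memdim(\<S>)\<close> hops; this walk bounds the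
graph distance between any two vertices.\<close>

lemma is_walk_singleton: "w \<in> U \<Longrightarrow> is_walk U E w w [w]"
  by (simp add: is_walk_def)

lemma is_walk_Cons:
  assumes "is_walk U E v w xs" and "u \<in> U" and "E u v"
  shows "is_walk U E u w (u # xs)"
  using assms unfolding is_walk_def
  by (auto simp: nth_Cons split: nat.splits) (metis hd_conv_nth)

lemma gdist_le_walk_length:
  "is_walk U E u w xs \<Longrightarrow> gdist U E u w \<le> enat (length xs - 1)"
  unfolding gdist_def by (rule INF_lower) simp

lemma cdist_le_card_cat:
  assumes "finite S"
  shows "cdist S u w \<le> card (cat S w)"
  unfolding cdist_def using assms by (intro card_mono) (auto simp: cat_def)

lemma card_cat_le_memdim:
  assumes "finite U" and "w \<in> U"
  shows "card (cat S w) \<le> memdim U S"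
  unfolding memdim_def using assms by (intro cSup_upper) auto

lemma routing_correct_walk:
  assumes routing: "routing_correct U E S" and "w \<in> U" and "u \<in> U"
  shows "\<exists>xs. is_walk U E u w xs \<and> length xs - 1 \<le> cdist S u w"
  using \<open>u \<in> U\<close>
proof (induction "cdist S u w" arbitrary: u rule: less_induct)
  case less
  show ?case
  proof (cases "u = w")
    case True
    then show ?thesis using \<open>w \<in> U\<close> is_walk_singleton by fastforce
  next
    case False
    then obtain v where v: "v \<in> nbrs U E u" and closer: "cdist S v w < cdist S u w"
      using routing less.prems \<open>w \<in> U\<close> unfolding routing_correct_def by blast
    then have "v \<in> U" and "E u v" by (auto simp: nbrs_def)
    obtain xs where walk: "is_walk U E v w xs" and len: "length xs - 1 \<le> cdist S v w"
      using less.hyps[OF closer \<open>v \<in> U\<close>] by blast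
    have "is_walk U E u w (u # xs)"
      using is_walk_Cons[OF walk less.prems \<open>E u v\<close>] .
    moreover have "length (u # xs) - 1 \<le> cdist S u w"
      using len closer walk unfolding is_walk_def by (cases xs) auto
    ultimately show ?thesis by blast
  qed
qed

theorem lemma3:
  fixes U :: "'a set" and E :: "'a \<Rightarrow> 'a \<Rightarrow> bool" and S :: "'a set set"
  assumes "is_graph U E"
    and "S \<subseteq> Pow U"
    and "routing_correct U E S"
  shows "enat (memdim U S) \<ge> diam U E"
proof -
  have "finite U" using assms(1) by (simp add: is_graph_def)
  then have "finite S" using assms(2) by (meson finite_Pow_iff finite_subset)
  have "gdist U E u w \<le> enat (memdim U S)" if "u \<in> U" and "w \<in> U" for u w
  proof -
    obtain xs where walk: "is_walk U E u w xs" and len: "length xs - 1 \<le> cdist S u w"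
      using routing_correct_walk[OF assms(3) \<open>w \<in> U\<close> \<open>u \<in> U\<close>] by blast
    have "gdist U E u w \<le> enat (length xs - 1)" using gdist_le_walk_length[OF walk] .
    also have "\<dots> \<le> enat (cdist S u w)" using len by simp
    also have "cdist S u w \<le> card (cat S w)" using cdist_le_card_cat[OF \<open>finite S\<close>] .
    also have "card (cat S w) \<le> memdim U S" using card_cat_le_memdim[OF \<open>finite U\<close> \<open>w \<in> U\<close>] .
    finally show ?thesis by simp
  qed
  then show ?thesis unfolding diam_def by (intro SUP_least) auto
qed

end
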